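(* Let $p,q\in\mathbb{N}\cup\{0\}$, $N=p+q$, and let $\boldsymbol{\mu}_{p,q}: C_2^N\to C_2=\{\pm1\}$ be defined by \[ \boldsymbol{\mu}_{p,q}\big(\mathbf{e}_1^{a_1}\cdots\mathbf{e}_N^{a_N}\big) = (-1)^{\,a_{p+1}+\cdots+a_N + \sum_{1\le i<j\le N} a_ia_j}, \qquad a_i\in\{0,1\}, \] where $\mathbf{e}_1,\ldots,\mathbf{e}_N$ are the canonical generators of $C_2^N$. Then \[ \mathrm{Arf}(\boldsymbol{\mu}_{p,q}) = \mathrm{sign}\Big(\cos\frac{(p-q)\pi}{4} + \sin\frac{(p-q)\pi}{4}\Big) = \begin{cases} 1 & \text{if } p-q+1 \equiv 1,2,3 \pmod 8,\\ 0 & \text{if } p-q+1\equiv 0,4 \pmod 8,\\ -1 & \text{if } p-q+1 \equiv 5,6,7\pmod 8.\end{cases} \]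
   Context: $C_2=\{\pm1\}$ is the multiplicative group of order $2$ and $\mathbf{e}_i\in C_2^N$ has $-1$ in position $i$ and $1$ elsewhere. For a map $\boldsymbol{\mu}: C_2^N\to C_2$, the Arf invariant is $\mathrm{Arf}(\boldsymbol{\mu}) = 1$ if $|\boldsymbol{\mu}^{-1}(+1)| > |\boldsymbol{\mu}^{-1}(-1)|$, $0$ if they are equal, and $-1$ if $|\boldsymbol{\mu}^{-1}(+1)| < |\boldsymbol{\mu}^{-1}(-1)|$. $\mathrm{sign}(x)\in\{1,0,-1\}$ is the sign of the real number $x$, with $\mathrm{sign}(0)=0$. *)

theory Defs
  imports Complex_Main
begin

text \<open>C_2 = {1,-1} as integers. An element of C_2^N is a function x with
  x i \<in> {1,-1} for i \<in> {1..N} and x i = 1 outside (extensional).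
  e_i has -1 in position i and 1 elsewhere.\<close>

definition C2N :: "nat \<Rightarrow> (nat \<Rightarrow> int) set" where
  "C2N N = {x. (\<forall>i\<in>{1..N}. x i = 1 \<or> x i = -1) \<and> (\<forall>i. i \<notin> {1..N} \<longrightarrow> x i = 1)}"

definition gen_e :: "nat \<Rightarrow> nat \<Rightarrow> int" where
  "gen_e i = (\<lambda>j. if j = i then -1 else 1)"

definition expo :: "(nat \<Rightarrow> int) \<Rightarrow> nat \<Rightarrow> nat" where
  "expo x i = (if x i = -1 then 1 else 0)"

definition mu_pq :: "nat \<Rightarrow> nat \<Rightarrow> (nat \<Rightarrow> int) \<Rightarrow> int" where
  "mu_pq p q x = (let N = p + q; a = expo x in
     (-1) ^ ((\<Sum>i\<in>{p+1..N}. a i) + (\<Sum>(i,j)\<in>{(i,j). 1 \<le> i \<and> i < j \<and> j \<le> N}. a i * a j)))"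

definition Arf :: "nat \<Rightarrow> ((nat \<Rightarrow> int) \<Rightarrow> int) \<Rightarrow> int" where
  "Arf N mu = sgn (int (card {x\<in>C2N N. mu x = 1}) - int (card {x\<in>C2N N. mu x = -1}))"

end

theory Submission
  imports Defs
begin

text \<open>Write \<open>a\<^sub>j\<close> for the exponents of \<open>x\<close> and \<open>k\<close> for their sum. For 0/1 exponents the
  quadratic part of the exponent of \<open>\<mu>\<close> is \<open>k choose 2\<close>, and \<open>(-1)^(k choose 2) = Re ((1 - \<i>) \<i>^k)\<close>;
  hence \<open>\<mu>(x)\<close> is the real part of \<open>1 - \<i>\<close> times the product of \<open>\<i>^a\<^sub>j\<close> over \<open>j \<le> p\<close> and
  of \<open>(-\<i>)^a\<^sub>j\<close> over \<open>j > p\<close>. Summed over the cube this product factorises, so the sum of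
  \<open>\<mu>\<close> is \<open>Re ((1 - \<i>) (1 + \<i>)^p (1 - \<i>)^q) = \<surd>2^N (cos (d\<pi>/4) + sin (d\<pi>/4))\<close> with
  \<open>d = p - q\<close>, by the polar forms of \<open>1 \<plusminus> \<i>\<close>. The Arf invariant is the sign of this sum,
  and \<open>cos (d\<pi>/4) + sin (d\<pi>/4) = \<surd>2 sin ((d + 1)\<pi>/4)\<close> yields the table modulo 8.\<close>

lemma C2N_0: "C2N 0 = {\<lambda>_. 1}"
  by (auto simp: C2N_def)

lemma C2N_Suc: "C2N (Suc N) = (\<lambda>(x, b). x(Suc N := b)) ` (C2N N \<times> {1, -1})"
proof (rule set_eqI, rule iffI)
  fix y assume y: "y \<in> C2N (Suc N)"
  have "y(Suc N := 1) \<in> C2N N" "y (Suc N) \<in> {1, -1}"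
    using y by (auto simp: C2N_def)
  then show "y \<in> (\<lambda>(x, b). x(Suc N := b)) ` (C2N N \<times> {1, -1})"
    by (intro image_eqI[where x = "(y(Suc N := 1), y (Suc N))"]) simp_all
next
  fix y assume "y \<in> (\<lambda>(x, b). x(Suc N := b)) ` (C2N N \<times> {1, -1})"
  then obtain x b where "x \<in> C2N N" "b \<in> {1, -1}" "y = x(Suc N := b)"
    by auto
  then show "y \<in> C2N (Suc N)"
    by (auto simp: C2N_def le_Suc_eq)
qed

lemma inj_on_C2N_Suc: "inj_on (\<lambda>(x, b). x(Suc N := b)) (C2N N \<times> {1, -1})"
proof (rule inj_onI, clarify)
  fix x b x' b'
  assume x: "x \<in> C2N N" and x': "x' \<in> C2N N" and eq: "x(Suc N := b) = x'(Suc N := b')"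
  have "x i = x' i" for i
    using x x' fun_cong[OF eq, of i] by (cases "i = Suc N") (auto simp: C2N_def)
  then show "x = x' \<and> b = b'"
    using fun_cong[OF eq, of "Suc N"] by auto
qed

lemma finite_C2N: "finite (C2N N)"
  by (induction N) (simp_all add: C2N_0 C2N_Suc)

lemma sum_C2N_Suc:
  "(\<Sum>x\<in>C2N (Suc N). f x) = (\<Sum>x\<in>C2N N. f (x(Suc N := 1)) + f (x(Suc N := -1)))"
proof -
  have "(\<Sum>x\<in>C2N (Suc N). f x) = (\<Sum>(x, b)\<in>C2N N \<times> {1, -1}. f (x(Suc N := b)))"
    unfolding C2N_Suc by (subst sum.reindex[OF inj_on_C2N_Suc]) (simp add: case_prod_unfold)
  also have "\<dots> = (\<Sum>x\<in>C2N N. \<Sum>b\<in>{1, -1}. f (x(Suc N := b)))"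
    by (rule sum.cartesian_product[symmetric])
  finally show ?thesis
    by simp
qed

lemma sum_C2N_prod_expo:
  fixes w :: "nat \<Rightarrow> nat \<Rightarrow> 'a::comm_semiring_1"
  shows "(\<Sum>x\<in>C2N N. \<Prod>i\<in>{1..N}. w i (expo x i)) = (\<Prod>i\<in>{1..N}. w i 0 + w i 1)"
proof (induction N)
  case 0
  then show ?case
    by (simp add: C2N_0)
next
  case (Suc N)
  have prod_upd: "(\<Prod>i\<in>{1..Suc N}. w i (expo (x(Suc N := b)) i))
      = (\<Prod>i\<in>{1..N}. w i (expo x i)) * w (Suc N) (expo (x(Suc N := b)) (Suc N))" for x b
  proof -
    have "(\<Prod>i\<in>{1..N}. w i (expo (x(Suc N := b)) i)) = (\<Prod>i\<in>{1..N}. w i (expo x i))"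
      by (rule prod.cong) (auto simp: expo_def)
    then show ?thesis
      by simp
  qed
  have "(\<Sum>x\<in>C2N (Suc N). \<Prod>i\<in>{1..Suc N}. w i (expo x i))
      = (\<Sum>x\<in>C2N N. \<Prod>i\<in>{1..N}. w i (expo x i)) * (w (Suc N) 0 + w (Suc N) 1)"
    unfolding sum_C2N_Suc prod_upd sum_distrib_right by (simp add: expo_def algebra_simps)
  also have "\<dots> = (\<Prod>i\<in>{1..N}. w i 0 + w i 1) * (w (Suc N) 0 + w (Suc N) 1)"
    by (simp only: Suc.IH)
  finally show ?case
    by simp
qed

lemma sum_pairs_zero_one_eq_choose:
  fixes a :: "nat \<Rightarrow> nat"
  assumes "\<And>i. a i \<le> 1"
  shows "(\<Sum>(i, j)\<in>{(i, j). 1 \<le> i \<and> i < j \<and> j \<le> N}. a i * a j) = (\<Sum>i\<in>{1..N}. a i) choose 2"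
proof (induction N)
  case 0
  have "{(i, j). 1 \<le> i \<and> i < j \<and> j \<le> (0::nat)} = {}"
    by auto
  then show ?case
    by (simp only:) simp
next
  case (Suc N)
  let ?P = "\<lambda>N. {(i, j). 1 \<le> i \<and> i < j \<and> j \<le> N}"
  let ?k = "\<Sum>i\<in>{1..N}. a i"
  have fin: "finite (?P N)"
    by (rule finite_subset[of _ "{1..N} \<times> {1..N}"]) auto
  have "?P (Suc N) = ?P N \<union> (\<lambda>i. (i, Suc N)) ` {1..N}"
    by (auto simp: le_Suc_eq)
  then have "(\<Sum>(i, j)\<in>?P (Suc N). a i * a j)
      = (\<Sum>(i, j)\<in>?P N. a i * a j) + (\<Sum>(i, j)\<in>(\<lambda>i. (i, Suc N)) ` {1..N}. a i * a j)"
    by (simp only:) (rule sum.union_disjoint[OF fin]; auto)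
  also have "(\<Sum>(i, j)\<in>(\<lambda>i. (i, Suc N)) ` {1..N}. a i * a j) = ?k * a (Suc N)"
    by (subst sum.reindex) (auto simp: inj_on_def sum_distrib_right)
  finally have "(\<Sum>(i, j)\<in>?P (Suc N). a i * a j) = (?k choose 2) + ?k * a (Suc N)"
    by (simp only: Suc.IH)
  moreover have "a (Suc N) = 0 \<or> a (Suc N) = 1"
    using assms[of "Suc N"] by auto
  ultimately show ?case
    by (auto simp: numeral_2_eq_2)
qed

lemma one_minus_ii_mult_ii_power:
  "(1 - \<i>) * \<i> ^ k = (-1) ^ (k choose 2) * (1 - \<i> * (-1) ^ k)"
proof (induction k)
  case (Suc k)
  have "(1 - \<i>) * \<i> ^ Suc k = ((1 - \<i>) * \<i> ^ k) * \<i>"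
    by (simp add: mult_ac)
  also have "\<dots> = (-1) ^ (k choose 2) * (\<i> + (-1) ^ k)"
    by (simp only: Suc.IH) (simp add: algebra_simps)
  also have "\<dots> = (-1) ^ ((k choose 2) + k) * (1 - \<i> * (-1) ^ Suc k)"
    unfolding power_add by (cases "even k") (simp_all add: algebra_simps)
  also have "(k choose 2) + k = Suc k choose 2"
    by (simp add: numeral_2_eq_2)
  finally show ?case .
qed (simp add: numeral_2_eq_2)

lemma Re_one_minus_ii_mult_ii_power: "Re ((1 - \<i>) * \<i> ^ k) = (-1) ^ (k choose 2)"
  unfolding one_minus_ii_mult_ii_power by (cases "even k") simp_all

lemma mu_pq_eq_Re_prod:
  "real_of_int (mu_pq p q x)
     = Re ((1 - \<i>) * (\<Prod>i\<in>{1..p + q}. (if i \<le> p then \<i> else -\<i>) ^ expo x i))"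
proof -
  let ?a = "expo x"
  define l where "l = (\<Sum>i\<in>{1..p}. ?a i)"
  define m where "m = (\<Sum>i\<in>{p + 1..p + q}. ?a i)"
  have ivl: "{1..p + q} = {1..p} \<union> {p + 1..p + q}" "{1..p} \<inter> {p + 1..p + q} = {}"
    by auto
  have "(\<Sum>i\<in>{1..p + q}. ?a i) = l + m"
    unfolding l_def m_def ivl(1) by (rule sum.union_disjoint) (simp_all add: ivl(2))
  then have "(\<Sum>(i, j)\<in>{(i, j). 1 \<le> i \<and> i < j \<and> j \<le> p + q}. ?a i * ?a j) = (l + m) choose 2"
    using sum_pairs_zero_one_eq_choose[of ?a "p + q"] by (simp add: expo_def)
  then have mu: "mu_pq p q x = (-1) ^ (m + ((l + m) choose 2))"
    by (simp add: mu_pq_def Let_def m_def)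
  have "(\<Prod>i\<in>{1..p + q}. (if i \<le> p then \<i> else -\<i>) ^ ?a i)
      = (\<Prod>i\<in>{1..p}. \<i> ^ ?a i) * (\<Prod>i\<in>{p + 1..p + q}. (-\<i>) ^ ?a i)"
    unfolding ivl(1) by (simp add: prod.union_disjoint ivl(2))
  also have "\<dots> = (-1) ^ m * \<i> ^ (l + m)"
    by (simp add: power_sum l_def m_def power_add power_minus[of \<i>] prod.distrib)
  finally have prod_eq: "(1 - \<i>) * (\<Prod>i\<in>{1..p + q}. (if i \<le> p then \<i> else -\<i>) ^ ?a i)
      = complex_of_real ((-1) ^ m) * ((1 - \<i>) * \<i> ^ (l + m))"
    by (simp add: mult_ac)
  have "Re ((1 - \<i>) * (\<Prod>i\<in>{1..p + q}. (if i \<le> p then \<i> else -\<i>) ^ ?a i))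
      = (-1) ^ m * Re ((1 - \<i>) * \<i> ^ (l + m))"
    unfolding prod_eq by simp
  also have "\<dots> = (-1) ^ m * (-1) ^ ((l + m) choose 2)"
    by (simp only: Re_one_minus_ii_mult_ii_power)
  also have "\<dots> = real_of_int (mu_pq p q x)"
    by (simp add: mu power_add)
  finally show ?thesis ..
qed

lemma sum_mu_pq_eq_Re:
  "(\<Sum>x\<in>C2N (p + q). real_of_int (mu_pq p q x)) = Re ((1 - \<i>) * ((1 + \<i>) ^ p * (1 - \<i>) ^ q))"
proof -
  let ?w = "\<lambda>i e. (if i \<le> p then \<i> else -\<i>) ^ e"
  have "(\<Sum>x\<in>C2N (p + q). real_of_int (mu_pq p q x))
      = Re ((1 - \<i>) * (\<Sum>x\<in>C2N (p + q). \<Prod>i\<in>{1..p + q}. ?w i (expo x i)))"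
    by (simp only: mu_pq_eq_Re_prod sum_distrib_left Re_sum)
  also have "(\<Sum>x\<in>C2N (p + q). \<Prod>i\<in>{1..p + q}. ?w i (expo x i)) = (\<Prod>i\<in>{1..p + q}. ?w i 0 + ?w i 1)"
    by (rule sum_C2N_prod_expo)
  also have "(\<Prod>i\<in>{1..p + q}. ?w i 0 + ?w i 1)
      = (\<Prod>i\<in>{1..p}. ?w i 0 + ?w i 1) * (\<Prod>i\<in>{p + 1..p + q}. ?w i 0 + ?w i 1)"
    by (subst prod.union_disjoint[symmetric]) (auto intro: prod.cong)
  finally show ?thesis
    by simp
qed

lemma one_plus_ii_polar: "1 + \<i> = complex_of_real (sqrt 2) * cis (pi / 4)"
  by (simp add: complex_eq_iff cos_45 sin_45)

lemma one_minus_ii_polar: "1 - \<i> = complex_of_real (sqrt 2) * cis (- (pi / 4))"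
  by (simp add: complex_eq_iff cos_45 sin_45)

lemma Re_one_minus_ii_mult_gauss:
  "Re ((1 - \<i>) * ((1 + \<i>) ^ p * (1 - \<i>) ^ q))
     = sqrt 2 ^ (p + q) * (cos ((real p - real q) * pi / 4) + sin ((real p - real q) * pi / 4))"
proof -
  have "(1 + \<i>) ^ p * (1 - \<i>) ^ q
      = complex_of_real (sqrt 2 ^ (p + q)) * (cis (real p * (pi / 4)) * cis (real q * (- (pi / 4))))"
    unfolding one_plus_ii_polar one_minus_ii_polar by (simp add: power_mult_distrib DeMoivre power_add)
  also have "cis (real p * (pi / 4)) * cis (real q * (- (pi / 4))) = cis ((real p - real q) * pi / 4)"
    by (simp add: cis_mult field_simps)
  finally show ?thesis
    by (simp add: algebra_simps)
qed

lemma Arf_eq_sgn_sum: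
  assumes "\<And>x. mu x = 1 \<or> mu x = -1"
  shows "Arf N mu = sgn (\<Sum>x\<in>C2N N. mu x)"
proof -
  let ?A = "{x\<in>C2N N. mu x = 1}" and ?B = "{x\<in>C2N N. mu x = -1}"
  have "C2N N = ?A \<union> ?B"
    using assms by auto
  then have "(\<Sum>x\<in>C2N N. mu x) = (\<Sum>x\<in>?A \<union> ?B. mu x)"
    by (rule arg_cong)
  also have "\<dots> = (\<Sum>x\<in>?A. mu x) + (\<Sum>x\<in>?B. mu x)"
    using finite_C2N[of N] by (intro sum.union_disjoint) auto
  also have "\<dots> = (\<Sum>x\<in>?A. 1) + (\<Sum>x\<in>?B. -1)"
    by (intro arg_cong2[where f = "(+)"] sum.cong) auto
  also have "\<dots> = int (card ?A) - int (card ?B)"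
    by simp
  finally show ?thesis
    by (simp add: Arf_def)
qed

lemma mu_pq_cases: "mu_pq p q x = 1 \<or> mu_pq p q x = -1"
proof -
  have "(-1 :: int) ^ n = 1 \<or> (-1 :: int) ^ n = -1" for n
    by (cases "even n") simp_all
  then show ?thesis
    by (simp add: mu_pq_def Let_def)
qed

lemma sgn_sin_of_int_mult_pi_div_4:
  "sgn (sin (of_int m * pi / 4))
     = (if m mod 8 \<in> {1, 2, 3} then 1 else if m mod 8 \<in> {0, 4} then 0 else (-1::real))"
proof -
  define r where "r = m mod 8"
  have r: "0 \<le> r" "r < 8"
    by (simp_all add: r_def)
  have "real_of_int m = of_int r + 8 * of_int (m div 8)"
    unfolding r_def by (metis mod_mult_div_eq of_int_add of_int_mult of_int_numeral)
  then have "of_int m * pi / 4 = of_int r * pi / 4 + (2 * pi) * of_int (m div 8)"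
    by (simp add: algebra_simps)
  then have sin_m: "sin (of_int m * pi / 4) = sin (of_int r * pi / 4)"
    by (simp only: sin_add sin_int_2pin cos_int_2pin mult_zero_right mult_1_right add_0_right)
  have pos: "sin (of_int r * pi / 4) > 0" if "0 < r" "r < 4"
    using that by (intro sin_gt_zero) simp_all
  have neg: "sin (of_int r * pi / 4) < 0" if "4 < r"
  proof -
    have "of_int r * pi / 4 = of_int (r - 4) * pi / 4 + pi"
      by (simp add: field_simps)
    then have "sin (of_int r * pi / 4) = - sin (of_int (r - 4) * pi / 4)"
      by (simp only: sin_periodic_pi)
    moreover have "sin (of_int (r - 4) * pi / 4) > 0"
      using that r by (intro sin_gt_zero) simp_all
    ultimately show ?thesis
      by simp
  qed
  show ?thesis
    unfolding sin_m r_def[symmetric] using r pos neg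
    by (cases "r < 4"; cases "r = 0"; cases "r = 4") auto
qed

lemma cos_plus_sin_eq_sqrt2_sin: "cos x + sin x = sqrt 2 * sin (x + pi / 4)"
  by (simp add: sin_add cos_45 sin_45 algebra_simps)

lemma sgn_cos_plus_sin_of_int_mult_pi_div_4:
  "sgn (cos (of_int d * pi / 4) + sin (of_int d * pi / 4))
     = (if (d + 1) mod 8 \<in> {1, 2, 3} then 1 else if (d + 1) mod 8 \<in> {0, 4} then 0 else (-1::real))"
proof -
  have arg: "of_int d * pi / 4 + pi / 4 = of_int (d + 1) * pi / 4"
    by (simp add: field_simps)
  have "sgn (cos (of_int d * pi / 4) + sin (of_int d * pi / 4)) = sgn (sin (of_int (d + 1) * pi / 4))"
    unfolding cos_plus_sin_eq_sqrt2_sin arg by (simp add: sgn_mult)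
  then show ?thesis
    by (simp only: sgn_sin_of_int_mult_pi_div_4)
qed

theorem theorem7p1:
  fixes p q :: nat
  shows "real_of_int (Arf (p + q) (mu_pq p q))
           = sgn (cos ((real p - real q) * pi / 4) + sin ((real p - real q) * pi / 4))
       \<and> Arf (p + q) (mu_pq p q) =
           (if (int p - int q + 1) mod 8 \<in> {1, 2, 3} then 1
            else if (int p - int q + 1) mod 8 \<in> {0, 4} then 0
            else -1)"
proof
  let ?c = "cos ((real p - real q) * pi / 4) + sin ((real p - real q) * pi / 4)"
  have "real_of_int (sgn s) = sgn (real_of_int s)" for s :: int
    by (simp add: sgn_if)
  then have "real_of_int (Arf (p + q) (mu_pq p q)) = sgn (\<Sum>x\<in>C2N (p + q). real_of_int (mu_pq p q x))"
    by (simp add: Arf_eq_sgn_sum[OF mu_pq_cases])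
  also have "\<dots> = sgn (sqrt 2 ^ (p + q) * ?c)"
    by (simp only: sum_mu_pq_eq_Re Re_one_minus_ii_mult_gauss)
  finally show arf: "real_of_int (Arf (p + q) (mu_pq p q)) = sgn ?c"
    by (simp add: sgn_mult)
  have "real p - real q = of_int (int p - int q)"
    by simp
  then have "sgn ?c = (if (int p - int q + 1) mod 8 \<in> {1, 2, 3} then 1
      else if (int p - int q + 1) mod 8 \<in> {0, 4} then 0 else -1)"
    by (simp only: sgn_cos_plus_sin_of_int_mult_pi_div_4)
  with arf have "real_of_int (Arf (p + q) (mu_pq p q))
      = real_of_int (if (int p - int q + 1) mod 8 \<in> {1, 2, 3} then 1
      else if (int p - int q + 1) mod 8 \<in> {0, 4} then 0 else -1)"
    by simp
  then show "Arf (p + q) (mu_pq p q) = (if (int p - int q + 1) mod 8 \<in> {1, 2, 3} then 1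
      else if (int p - int q + 1) mod 8 \<in> {0, 4} then 0 else -1)"
    by (simp only: of_int_eq_iff)
qed

end
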